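(* With the notation of the context, the following identities hold for all $(t,s)\in I\times I$, each whenever the Green's functions appearing in it exist: (i) $G_N[T](t,s)=G_P[2T](t,s)+G_P[2T](2T-t,s)$; (ii) $G_N[T](t,s)=G_N[2T](t,s)+G_N[2T](2T-t,s)$; (iii) $G_N[T](t,s)=G_P[4T](t,s)+G_P[4T](4T-t,s)+G_P[4T](2T-t,s)+G_P[4T](2T+t,s)$.
   Context: Fix $n\ge 1$, $T>0$, $I=[0,T]$, $J=[0,2T]$. $W^{2n,1}(K)$ denotes the set of $u\in C^{2n-1}(K)$ with $u^{(2n-1)}$ absolutely continuous on the interval $K$. Let $a_0,\dots,a_{2n-1}\in L^{\alpha}(I)$, $\alpha\ge1$, and $Lu=u^{(2n)}+\sum_{k=0}^{2n-1}a_ku^{(k)}$ on $I$. Define $\widetilde L u=u^{(2n)}+\sum_{k=0}^{n-1}(\hat a_{2k+1}u^{(2k+1)}+\tilde a_{2k}u^{(2k)})$ on $J$, where $\tilde a_{2k}=a_{2k}$ and $\hat a_{2k+1}=a_{2k+1}$ on $I$, and $\tilde a_{2k}(t)=a_{2k}(2T-t)$, $\hat a_{2k+1}(t)=-a_{2k+1}(2T-t)$ for $t\in(T,2T]$. Define $\widetilde{\widetilde L}$ on $[0,4T]$ by applying the same construction to $\widetilde L$ (coefficients of even-order derivatives extended evenly about $2T$, those of odd-order derivatives extended oddly about $2T$). An operator $M$ is nonresonant in a Banach space $X\subset W^{2n,1}(K)$ if $Mu=0$ a.e., $u\in X$, forces $u\equiv0$; then $Mu=\sigma$, $u\in X$ has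 for every $\sigma\in L^1(K)$ the unique solution $u(t)=\int_K G(t,s)\sigma(s)ds$, $G$ being the Green's function. Green's functions (each defined when the operator is nonresonant in the indicated space): $G_N[T]$ for $L$ on $X_{N,T}=\{u\in W^{2n,1}(I): u^{(2k+1)}(0)=u^{(2k+1)}(T)=0,\ k=0,\dots,n-1\}$; $G_P[2T]$ for $\widetilde L$ on $X_{P,2T}=\{u\in W^{2n,1}(J): u^{(k)}(0)=u^{(k)}(2T),\ k=0,\dots,2n-1\}$; $G_N[2T]$ for $\widetilde L$ on $X_{N,2T}=\{u\in W^{2n,1}(J): u^{(2k+1)}(0)=u^{(2k+1)}(2T)=0,\ k=0,\dots,n-1\}$; $G_P[4T]$ for $\widetilde{\widetilde L}$ on $\{u\in W^{2n,1}([0,4T]): u^{(k)}(0)=u^{(k)}(4T),\ k=0,\dots,2n-1\}$. *)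

theory Defs
  imports "HOL-Analysis.Analysis"
begin

definition abs_cont_on :: "real \<Rightarrow> real \<Rightarrow> (real \<Rightarrow> real) \<Rightarrow> bool" where
  "abs_cont_on lo hi f \<longleftrightarrow>
     (\<forall>\<epsilon>>0. \<exists>\<delta>>0. \<forall>(N::nat) (l::nat \<Rightarrow> real) (r::nat \<Rightarrow> real).
        (\<forall>i<N. lo \<le> l i \<and> l i \<le> r i \<and> r i \<le> hi) \<and>
        (\<forall>i<N. \<forall>j<N. i \<noteq> j \<longrightarrow> r i \<le> l j \<or> r j \<le> l i) \<and>
        (\<Sum>i<N. r i - l i) < \<delta>
        \<longrightarrow> (\<Sum>i<N. \<bar>f (r i) - f (l i)\<bar>) < \<epsilon>)"

text \<open>Membership of u in W^{m,1}([lo,hi]) (m \<ge> 1), witnessed by its derivatives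
  D 0 = u, D 1, ..., D (m-1) on [lo,hi] (one-sided at the end points),
  with D (m-1) absolutely continuous.\<close>
definition W_derivs :: "nat \<Rightarrow> real \<Rightarrow> real \<Rightarrow> (real \<Rightarrow> real) \<Rightarrow> (nat \<Rightarrow> real \<Rightarrow> real) \<Rightarrow> bool" where
  "W_derivs m lo hi u D \<longleftrightarrow>
     (\<forall>t\<in>{lo..hi}. D 0 t = u t) \<and>
     (\<forall>k. Suc k < m \<longrightarrow> (\<forall>t\<in>{lo..hi}. (D k has_real_derivative D (Suc k) t) (at t within {lo..hi}))) \<and>
     abs_cont_on lo hi (D (m - 1))"

definition W_space :: "nat \<Rightarrow> real \<Rightarrow> real \<Rightarrow> (real \<Rightarrow> real) set" where
  "W_space m lo hi = {u. \<exists>D. W_derivs m lo hi u D}"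

definition X_Neumann :: "nat \<Rightarrow> real \<Rightarrow> real \<Rightarrow> (real \<Rightarrow> real) set" where
  "X_Neumann m lo hi =
     {u. \<exists>D. W_derivs m lo hi u D \<and> (\<forall>k. 2*k+1 < m \<longrightarrow> D (2*k+1) lo = 0 \<and> D (2*k+1) hi = 0)}"

definition X_Periodic :: "nat \<Rightarrow> real \<Rightarrow> real \<Rightarrow> (real \<Rightarrow> real) set" where
  "X_Periodic m lo hi = {u. \<exists>D. W_derivs m lo hi u D \<and> (\<forall>k<m. D k lo = D k hi)}"

definition op_eq :: "nat \<Rightarrow> (nat \<Rightarrow> real \<Rightarrow> real) \<Rightarrow> real \<Rightarrow> real \<Rightarrow> (real \<Rightarrow> real) \<Rightarrow> (real \<Rightarrow> real) \<Rightarrow> bool" where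
  "op_eq m a lo hi u \<sigma> \<longleftrightarrow>
     (\<exists>D. W_derivs m lo hi u D \<and>
        (AE t in lebesgue_on {lo..hi}.
           \<exists>d. (D (m - 1) has_real_derivative d) (at t within {lo..hi}) \<and>
               d + (\<Sum>k<m. a k t * D k t) = \<sigma> t))"

definition nonresonant :: "nat \<Rightarrow> (nat \<Rightarrow> real \<Rightarrow> real) \<Rightarrow> real \<Rightarrow> real \<Rightarrow> (real \<Rightarrow> real) set \<Rightarrow> bool" where
  "nonresonant m a lo hi X \<longleftrightarrow>
     (\<forall>u. u \<in> X \<and> op_eq m a lo hi u (\<lambda>_. 0) \<longrightarrow> (\<forall>t\<in>{lo..hi}. u t = 0))"

definition is_green :: "nat \<Rightarrow> (nat \<Rightarrow> real \<Rightarrow> real) \<Rightarrow> real \<Rightarrow> real \<Rightarrow> (real \<Rightarrow> real) set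
                         \<Rightarrow> (real \<Rightarrow> real \<Rightarrow> real) \<Rightarrow> bool" where
  "is_green m a lo hi X G \<longleftrightarrow>
     nonresonant m a lo hi X \<and>
     continuous_on ({lo..hi} \<times> {lo..hi}) (\<lambda>(t, s). G t s) \<and>
     (\<forall>\<sigma>. integrable (lebesgue_on {lo..hi}) \<sigma> \<longrightarrow>
        (\<forall>u. (u \<in> X \<and> op_eq m a lo hi u \<sigma>) \<longleftrightarrow>
             (\<forall>t\<in>{lo..hi}. u t = (LINT s|lebesgue_on {lo..hi}. G t s * \<sigma> s))))"

definition Lp_on :: "real \<Rightarrow> real set \<Rightarrow> (real \<Rightarrow> real) \<Rightarrow> bool" where
  "Lp_on p S f \<longleftrightarrow> f \<in> borel_measurable (lebesgue_on S) \<and>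
                   integrable (lebesgue_on S) (\<lambda>t. \<bar>f t\<bar> powr p)"

definition refl_ext :: "real \<Rightarrow> (nat \<Rightarrow> real \<Rightarrow> real) \<Rightarrow> nat \<Rightarrow> real \<Rightarrow> real" where
  "refl_ext T a k t =
     (if t \<le> T then a k t
      else if even k then a k (2*T - t) else - a k (2*T - t))"

end

theory Submission
  imports Defs
begin

text \<open>Given continuous data \<open>\<sigma>\<close> on \<open>[0, T]\<close>, extend it by zero to the larger interval and let
  \<open>w\<close> solve the larger problem. Summing \<open>w\<close> over a family of isometries \<open>t \<mapsto> c + \<epsilon> t\<close> of
  \<open>[0, T]\<close> into the larger interval (\<open>t, 2T - t\<close>, resp. \<open>t, 4T - t, 2T - t, 2T + t\<close>) gives a
  solution of the Neumann problem on \<open>[0, T]\<close>: the reflected coefficients make every copy of \<open>w\<close>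
  solve the equation, the zero extension contributes \<open>\<sigma>\<close> only through the identity, and the
  odd derivatives of the sum vanish at \<open>0\<close> and \<open>T\<close> by symmetry (and periodicity, resp. the Neumann
  conditions, of \<open>w\<close>). By uniqueness, \<open>G\<^sub>N[T]\<close> and the reflected sum of the larger Green's function
  integrate every continuous \<open>\<sigma>\<close> to the same function; testing with their difference itself shows
  that they coincide.\<close>

section \<open>Absolute continuity\<close>

definition nonoverlapping_in :: "real \<Rightarrow> real \<Rightarrow> nat \<Rightarrow> (nat \<Rightarrow> real) \<Rightarrow> (nat \<Rightarrow> real) \<Rightarrow> bool" where
  "nonoverlapping_in lo hi N l r \<longleftrightarrow> (\<forall>i<N. lo \<le> l i \<and> l i \<le> r i \<and> r i \<le> hi) \<and>
     (\<forall>i<N. \<forall>j<N. i \<noteq> j \<longrightarrow> r i \<le> l j \<or> r j \<le> l i)"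

lemma abs_cont_on_iff:
  "abs_cont_on lo hi f \<longleftrightarrow>
     (\<forall>e>0. \<exists>d>0. \<forall>N l r. nonoverlapping_in lo hi N l r \<and> (\<Sum>i<N. r i - l i) < d \<longrightarrow>
        (\<Sum>i<N. \<bar>f (r i) - f (l i)\<bar>) < e)"
  unfolding abs_cont_on_def nonoverlapping_in_def by simp

lemma abs_cont_onD:
  assumes "abs_cont_on lo hi f" "e > 0"
  obtains d where "d > 0"
    "\<And>N l r. nonoverlapping_in lo hi N l r \<Longrightarrow> (\<Sum>i<N. r i - l i) < d \<Longrightarrow>
       (\<Sum>i<N. \<bar>f (r i) - f (l i)\<bar>) < e"
  using assms unfolding abs_cont_on_iff by metis

lemma abs_cont_on_const: "abs_cont_on lo hi (\<lambda>_. c)"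
  unfolding abs_cont_on_def by auto

lemma abs_cont_on_add:
  assumes f: "abs_cont_on lo hi f" and g: "abs_cont_on lo hi g"
  shows "abs_cont_on lo hi (\<lambda>t. f t + g t)"
  unfolding abs_cont_on_iff
proof (intro allI impI)
  fix e :: real assume "e > 0"
  then have "e/2 > 0" by simp
  obtain d1 where "d1 > 0"
    and f_small: "\<And>N l r. nonoverlapping_in lo hi N l r \<Longrightarrow> (\<Sum>i<N. r i - l i) < d1 \<Longrightarrow>
                    (\<Sum>i<N. \<bar>f (r i) - f (l i)\<bar>) < e/2"
    using abs_cont_onD[OF f \<open>e/2 > 0\<close>] by blast
  obtain d2 where "d2 > 0"
    and g_small: "\<And>N l r. nonoverlapping_in lo hi N l r \<Longrightarrow> (\<Sum>i<N. r i - l i) < d2 \<Longrightarrow>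
                    (\<Sum>i<N. \<bar>g (r i) - g (l i)\<bar>) < e/2"
    using abs_cont_onD[OF g \<open>e/2 > 0\<close>] by blast
  have "(\<Sum>i<N. \<bar>(f (r i) + g (r i)) - (f (l i) + g (l i))\<bar>) < e"
    if "nonoverlapping_in lo hi N l r" "(\<Sum>i<N. r i - l i) < min d1 d2" for N l r
  proof -
    have "(\<Sum>i<N. \<bar>(f (r i) + g (r i)) - (f (l i) + g (l i))\<bar>)
            \<le> (\<Sum>i<N. \<bar>f (r i) - f (l i)\<bar>) + (\<Sum>i<N. \<bar>g (r i) - g (l i)\<bar>)"
      unfolding sum.distrib[symmetric] by (intro sum_mono) linarith
    also have "\<dots> < e/2 + e/2"
      using f_small g_small that by (intro add_strict_mono) auto
    finally show ?thesis by simp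
  qed
  then show "\<exists>d>0. \<forall>N l r. nonoverlapping_in lo hi N l r \<and> (\<Sum>i<N. r i - l i) < d \<longrightarrow>
      (\<Sum>i<N. \<bar>(f (r i) + g (r i)) - (f (l i) + g (l i))\<bar>) < e"
    using \<open>d1 > 0\<close> \<open>d2 > 0\<close> by (intro exI[of _ "min d1 d2"]) auto
qed

lemma abs_cont_on_cmult:
  assumes f: "abs_cont_on lo hi f"
  shows "abs_cont_on lo hi (\<lambda>t. \<kappa> * f t)"
  unfolding abs_cont_on_iff
proof (intro allI impI)
  fix e :: real assume "e > 0"
  then have "e / (\<bar>\<kappa>\<bar> + 1) > 0" by simp
  then obtain d where "d > 0"
    and f_small: "\<And>N l r. nonoverlapping_in lo hi N l r \<Longrightarrow> (\<Sum>i<N. r i - l i) < d \<Longrightarrow>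
                    (\<Sum>i<N. \<bar>f (r i) - f (l i)\<bar>) < e / (\<bar>\<kappa>\<bar> + 1)"
    using abs_cont_onD[OF f] by blast
  have "(\<Sum>i<N. \<bar>\<kappa> * f (r i) - \<kappa> * f (l i)\<bar>) < e"
    if "nonoverlapping_in lo hi N l r" "(\<Sum>i<N. r i - l i) < d" for N l r
  proof -
    have "(\<Sum>i<N. \<bar>\<kappa> * f (r i) - \<kappa> * f (l i)\<bar>) = \<bar>\<kappa>\<bar> * (\<Sum>i<N. \<bar>f (r i) - f (l i)\<bar>)"
      by (simp add: sum_distrib_left abs_mult right_diff_distrib[symmetric])
    also have "\<dots> \<le> \<bar>\<kappa>\<bar> * (e / (\<bar>\<kappa>\<bar> + 1))"
      using f_small[OF that] by (intro mult_left_mono) auto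
    also have "\<dots> < e"
      using \<open>e > 0\<close> by (simp add: field_simps)
    finally show ?thesis .
  qed
  then show "\<exists>d>0. \<forall>N l r. nonoverlapping_in lo hi N l r \<and> (\<Sum>i<N. r i - l i) < d \<longrightarrow>
      (\<Sum>i<N. \<bar>\<kappa> * f (r i) - \<kappa> * f (l i)\<bar>) < e"
    using \<open>d > 0\<close> by blast
qed

lemma abs_cont_on_shift:
  assumes f: "abs_cont_on lo' hi' f" and maps: "\<forall>t\<in>{lo..hi}. c + t \<in> {lo'..hi'}"
  shows "abs_cont_on lo hi (\<lambda>t. f (c + t))"
  unfolding abs_cont_on_iff
proof (intro allI impI)
  fix e :: real assume "e > 0"
  then obtain d where "d > 0"
    and f_small: "\<And>N l r. nonoverlapping_in lo' hi' N l r \<Longrightarrow> (\<Sum>i<N. r i - l i) < d \<Longrightarrow>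
                    (\<Sum>i<N. \<bar>f (r i) - f (l i)\<bar>) < e"
    using abs_cont_onD[OF f] by blast
  have "(\<Sum>i<N. \<bar>f (c + r i) - f (c + l i)\<bar>) < e"
    if "nonoverlapping_in lo hi N l r" "(\<Sum>i<N. r i - l i) < d" for N l r
  proof (rule f_small)
    show "nonoverlapping_in lo' hi' N (\<lambda>i. c + l i) (\<lambda>i. c + r i)"
      using that(1) maps unfolding nonoverlapping_in_def by fastforce
    show "(\<Sum>i<N. (c + r i) - (c + l i)) < d"
      using that(2) by simp
  qed
  then show "\<exists>d>0. \<forall>N l r. nonoverlapping_in lo hi N l r \<and> (\<Sum>i<N. r i - l i) < d \<longrightarrow>
      (\<Sum>i<N. \<bar>f (c + r i) - f (c + l i)\<bar>) < e"
    using \<open>d > 0\<close> by blast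
qed

lemma abs_cont_on_reflect:
  assumes f: "abs_cont_on lo' hi' f" and maps: "\<forall>t\<in>{lo..hi}. c - t \<in> {lo'..hi'}"
  shows "abs_cont_on lo hi (\<lambda>t. f (c - t))"
  unfolding abs_cont_on_iff
proof (intro allI impI)
  fix e :: real assume "e > 0"
  then obtain d where "d > 0"
    and f_small: "\<And>N l r. nonoverlapping_in lo' hi' N l r \<Longrightarrow> (\<Sum>i<N. r i - l i) < d \<Longrightarrow>
                    (\<Sum>i<N. \<bar>f (r i) - f (l i)\<bar>) < e"
    using abs_cont_onD[OF f] by blast
  have "(\<Sum>i<N. \<bar>f (c - r i) - f (c - l i)\<bar>) < e"
    if "nonoverlapping_in lo hi N l r" "(\<Sum>i<N. r i - l i) < d" for N l r
  proof -
    have "nonoverlapping_in lo' hi' N (\<lambda>i. c - r i) (\<lambda>i. c - l i)"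
      using that(1) maps unfolding nonoverlapping_in_def by fastforce
    moreover have "(\<Sum>i<N. (c - l i) - (c - r i)) < d"
      using that(2) by simp
    ultimately have "(\<Sum>i<N. \<bar>f (c - l i) - f (c - r i)\<bar>) < e"
      by (rule f_small)
    then show ?thesis
      by (simp add: abs_minus_commute)
  qed
  then show "\<exists>d>0. \<forall>N l r. nonoverlapping_in lo hi N l r \<and> (\<Sum>i<N. r i - l i) < d \<longrightarrow>
      (\<Sum>i<N. \<bar>f (c - r i) - f (c - l i)\<bar>) < e"
    using \<open>d > 0\<close> by blast
qed

lemma abs_cont_on_affine:
  assumes f: "abs_cont_on lo' hi' f" and \<epsilon>: "\<epsilon> = 1 \<or> \<epsilon> = -1"
    and maps: "\<forall>t\<in>{lo..hi}. c + \<epsilon> * t \<in> {lo'..hi'}"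
  shows "abs_cont_on lo hi (\<lambda>t. f (c + \<epsilon> * t))"
  using \<epsilon>
proof
  assume "\<epsilon> = 1"
  then show ?thesis using abs_cont_on_shift[OF f, of lo hi c] maps by simp
next
  assume "\<epsilon> = -1"
  then show ?thesis using abs_cont_on_reflect[OF f, of lo hi c] maps by simp
qed

section \<open>Solutions under isometric changes of variable\<close>

lemma W_derivs_zero: "W_derivs m lo hi (\<lambda>_. 0) (\<lambda>_ _. 0)"
  unfolding W_derivs_def by (simp add: abs_cont_on_const)

lemma W_derivs_add:
  assumes "W_derivs m lo hi u D" "W_derivs m lo hi v E"
  shows "W_derivs m lo hi (\<lambda>t. u t + v t) (\<lambda>k t. D k t + E k t)"
  using assms unfolding W_derivs_def by (auto intro!: DERIV_add abs_cont_on_add)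

lemma W_derivs_sum:
  assumes "finite I" "\<And>i. i \<in> I \<Longrightarrow> W_derivs m lo hi (u i) (D i)"
  shows "W_derivs m lo hi (\<lambda>t. \<Sum>i\<in>I. u i t) (\<lambda>k t. \<Sum>i\<in>I. D i k t)"
  using assms by (induction I rule: finite_induct) (auto intro: W_derivs_zero W_derivs_add)

lemma DERIV_compose_affine:
  assumes f: "(f has_real_derivative f') (at (c + \<epsilon> * t) within {lo'..hi'})"
    and maps: "\<forall>t\<in>{lo..hi}. c + \<epsilon> * t \<in> {lo'..hi'}"
  shows "((\<lambda>t. f (c + \<epsilon> * t)) has_real_derivative f' * \<epsilon>) (at t within {lo..hi})"
proof -
  have "(f has_real_derivative f') (at (c + \<epsilon> * t) within (\<lambda>t. c + \<epsilon> * t) ` {lo..hi})"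
    using f by (rule DERIV_subset) (use maps in auto)
  moreover have "((\<lambda>t. c + \<epsilon> * t) has_real_derivative \<epsilon>) (at t within {lo..hi})"
    by (auto intro!: derivative_eq_intros)
  ultimately show ?thesis
    using DERIV_image_chain by (simp add: o_def)
qed

lemma W_derivs_affine:
  assumes W: "W_derivs m lo' hi' u D" and \<epsilon>: "\<epsilon> = 1 \<or> \<epsilon> = -1"
    and maps: "\<forall>t\<in>{lo..hi}. c + \<epsilon> * t \<in> {lo'..hi'}"
  shows "W_derivs m lo hi (\<lambda>t. u (c + \<epsilon> * t)) (\<lambda>k t. \<epsilon> ^ k * D k (c + \<epsilon> * t))"
  unfolding W_derivs_def
proof (intro conjI allI impI ballI)
  fix t assume "t \<in> {lo..hi}"
  then show "\<epsilon> ^ 0 * D 0 (c + \<epsilon> * t) = u (c + \<epsilon> * t)"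
    using W maps unfolding W_derivs_def by simp
next
  fix k t assume "Suc k < m" "t \<in> {lo..hi}"
  then have "(D k has_real_derivative D (Suc k) (c + \<epsilon> * t)) (at (c + \<epsilon> * t) within {lo'..hi'})"
    using W maps unfolding W_derivs_def by blast
  from DERIV_cmult[OF DERIV_compose_affine[OF this maps], of "\<epsilon> ^ k"]
  show "((\<lambda>t. \<epsilon> ^ k * D k (c + \<epsilon> * t)) has_real_derivative \<epsilon> ^ Suc k * D (Suc k) (c + \<epsilon> * t))
          (at t within {lo..hi})"
    by (simp add: mult_ac)
next
  show "abs_cont_on lo hi (\<lambda>t. \<epsilon> ^ (m - 1) * D (m - 1) (c + \<epsilon> * t))"
    using W unfolding W_derivs_def by (intro abs_cont_on_cmult abs_cont_on_affine[OF _ \<epsilon> maps]) blast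
qed

lemma AE_lebesgue_on_affine:
  fixes c \<epsilon> :: real
  assumes AE: "AE x in lebesgue_on {lo'..hi'}. P x" and "\<epsilon> \<noteq> 0"
    and maps: "\<forall>t\<in>{lo..hi}. c + \<epsilon> * t \<in> {lo'..hi'}"
  shows "AE t in lebesgue_on {lo..hi}. P (c + \<epsilon> * t)"
proof -
  have "AE x in lebesgue. x \<in> {lo'..hi'} \<longrightarrow> P x"
    using AE by (subst (asm) AE_restrict_space_iff) auto
  then obtain N where N: "N \<in> null_sets lebesgue" "{x. \<not> (x \<in> {lo'..hi'} \<longrightarrow> P x)} \<subseteq> N"
    unfolding eventually_ae_filter by auto
  define g where "g y = (y - c) / \<epsilon>" for y
  have "negligible (g ` N)"
  proof (rule negligible_locally_Lipschitz_image)
    show "negligible N"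
      using N negligible_iff_null_sets by blast
    show "\<exists>U B. open U \<and> x \<in> U \<and> (\<forall>y\<in>N \<inter> U. norm (g y - g x) \<le> B * norm (y - x))" for x
    proof (intro exI[of _ UNIV] exI[of _ "1 / \<bar>\<epsilon>\<bar>"] conjI ballI)
      fix y
      have "g y - g x = (y - x) / \<epsilon>"
        by (simp add: g_def diff_divide_distrib)
      then show "norm (g y - g x) \<le> 1 / \<bar>\<epsilon>\<bar> * norm (y - x)"
        by (simp add: abs_divide)
    qed auto
  qed auto
  moreover have "{t. \<not> (t \<in> {lo..hi} \<longrightarrow> P (c + \<epsilon> * t))} \<subseteq> g ` N"
  proof
    fix t assume "t \<in> {t. \<not> (t \<in> {lo..hi} \<longrightarrow> P (c + \<epsilon> * t))}"
    then have "c + \<epsilon> * t \<in> N"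
      using N maps by auto
    moreover have "g (c + \<epsilon> * t) = t"
      using \<open>\<epsilon> \<noteq> 0\<close> by (simp add: g_def)
    ultimately show "t \<in> g ` N"
      by (metis image_eqI)
  qed
  ultimately have "AE t in lebesgue. t \<in> {lo..hi} \<longrightarrow> P (c + \<epsilon> * t)"
    unfolding eventually_ae_filter negligible_iff_null_sets by blast
  then show ?thesis
    by (subst AE_restrict_space_iff) auto
qed

lemma AE_lebesgue_on_interior: "AE t in lebesgue_on {lo..hi}. lo < t \<and> t < (hi::real)"
proof -
  have "{lo, hi} \<in> null_sets lebesgue"
    using negligible_iff_null_sets negligible_finite by blast
  then have "AE t in lebesgue. t \<in> {lo..hi} \<longrightarrow> lo < t \<and> t < hi"
    unfolding eventually_ae_filter by (intro bexI[of _ "{lo, hi}"]) auto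
  then show ?thesis
    by (subst AE_restrict_space_iff) auto
qed

lemma op_eq_zero: "op_eq m a lo hi (\<lambda>_. 0) (\<lambda>_. 0)"
  unfolding op_eq_def by (intro exI[of _ "\<lambda>_ _. 0"] conjI W_derivs_zero) auto

lemma op_eq_add:
  assumes "op_eq m a lo hi u \<sigma>" "op_eq m a lo hi v \<tau>"
  shows "op_eq m a lo hi (\<lambda>t. u t + v t) (\<lambda>t. \<sigma> t + \<tau> t)"
proof -
  obtain D where D: "W_derivs m lo hi u D"
    and u_eq: "AE t in lebesgue_on {lo..hi}. \<exists>d. (D (m - 1) has_real_derivative d) (at t within {lo..hi})
                  \<and> d + (\<Sum>k<m. a k t * D k t) = \<sigma> t"
    using assms(1) unfolding op_eq_def by blast
  obtain E where E: "W_derivs m lo hi v E"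
    and v_eq: "AE t in lebesgue_on {lo..hi}. \<exists>d. (E (m - 1) has_real_derivative d) (at t within {lo..hi})
                  \<and> d + (\<Sum>k<m. a k t * E k t) = \<tau> t"
    using assms(2) unfolding op_eq_def by blast
  from u_eq v_eq
  have "AE t in lebesgue_on {lo..hi}.
          \<exists>d. ((\<lambda>t. D (m - 1) t + E (m - 1) t) has_real_derivative d) (at t within {lo..hi})
            \<and> d + (\<Sum>k<m. a k t * (D k t + E k t)) = \<sigma> t + \<tau> t"
  proof eventually_elim
    case (elim t)
    then obtain d e where
      "(D (m - 1) has_real_derivative d) (at t within {lo..hi})" "d + (\<Sum>k<m. a k t * D k t) = \<sigma> t"
      "(E (m - 1) has_real_derivative e) (at t within {lo..hi})" "e + (\<Sum>k<m. a k t * E k t) = \<tau> t"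
      by blast
    then show ?case
      by (intro exI[of _ "d + e"] conjI DERIV_add) (auto simp: distrib_left sum.distrib)
  qed
  then show ?thesis
    unfolding op_eq_def by (intro exI[of _ "\<lambda>k t. D k t + E k t"] conjI W_derivs_add[OF D E])
qed

lemma op_eq_sum:
  assumes "finite I" "\<And>i. i \<in> I \<Longrightarrow> op_eq m a lo hi (u i) (\<sigma> i)"
  shows "op_eq m a lo hi (\<lambda>t. \<Sum>i\<in>I. u i t) (\<lambda>t. \<Sum>i\<in>I. \<sigma> i t)"
  using assms by (induction I rule: finite_induct) (auto intro: op_eq_zero op_eq_add)

lemma op_eq_AE_cong:
  assumes "op_eq m a lo hi u \<sigma>" "AE t in lebesgue_on {lo..hi}. \<sigma> t = \<tau> t"
  shows "op_eq m a lo hi u \<tau>"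
proof -
  obtain D where D: "W_derivs m lo hi u D"
    and u_eq: "AE t in lebesgue_on {lo..hi}. \<exists>d. (D (m - 1) has_real_derivative d) (at t within {lo..hi})
                  \<and> d + (\<Sum>k<m. a k t * D k t) = \<sigma> t"
    using assms(1) unfolding op_eq_def by blast
  from u_eq assms(2)
  have "AE t in lebesgue_on {lo..hi}. \<exists>d. (D (m - 1) has_real_derivative d) (at t within {lo..hi})
          \<and> d + (\<Sum>k<m. a k t * D k t) = \<tau> t"
    by eventually_elim auto
  with D show ?thesis
    unfolding op_eq_def by blast
qed

text \<open>The leading derivative picks up the factor \<open>\<epsilon>\<^sup>m = 1\<close> (the order is even), the
  others are absorbed by the coefficients; hence odd-order coefficients are reflected oddly.\<close>
lemma op_eq_affine:
  assumes op: "op_eq m b lo' hi' u \<sigma>" and "even m" "m \<ge> 1" and \<epsilon>: "\<epsilon> = 1 \<or> \<epsilon> = -1"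
    and maps: "\<forall>t\<in>{lo..hi}. c + \<epsilon> * t \<in> {lo'..hi'}"
    and coeff: "\<forall>t\<in>{lo<..<hi}. \<forall>k<m. b k (c + \<epsilon> * t) = \<epsilon> ^ k * a k t"
  shows "op_eq m a lo hi (\<lambda>t. u (c + \<epsilon> * t)) (\<lambda>t. \<sigma> (c + \<epsilon> * t))"
proof -
  obtain D where D: "W_derivs m lo' hi' u D"
    and u_eq: "AE x in lebesgue_on {lo'..hi'}. \<exists>d. (D (m - 1) has_real_derivative d) (at x within {lo'..hi'})
                  \<and> d + (\<Sum>k<m. b k x * D k x) = \<sigma> x"
    using op unfolding op_eq_def by blast
  have "\<epsilon> \<noteq> 0" "\<epsilon> ^ m = 1"
    using \<epsilon> \<open>even m\<close> by auto
  from AE_lebesgue_on_affine[OF u_eq \<open>\<epsilon> \<noteq> 0\<close> maps] AE_lebesgue_on_interior[of lo hi]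
  have "AE t in lebesgue_on {lo..hi}.
          \<exists>d. ((\<lambda>t. \<epsilon> ^ (m - 1) * D (m - 1) (c + \<epsilon> * t)) has_real_derivative d) (at t within {lo..hi})
            \<and> d + (\<Sum>k<m. a k t * (\<epsilon> ^ k * D k (c + \<epsilon> * t))) = \<sigma> (c + \<epsilon> * t)"
  proof eventually_elim
    case (elim t)
    then obtain d where d: "(D (m - 1) has_real_derivative d) (at (c + \<epsilon> * t) within {lo'..hi'})"
      and eq: "d + (\<Sum>k<m. b k (c + \<epsilon> * t) * D k (c + \<epsilon> * t)) = \<sigma> (c + \<epsilon> * t)"
      by blast
    have "\<epsilon> ^ (m - 1) * (d * \<epsilon>) = d * (\<epsilon> ^ (m - 1) * \<epsilon>)"
      by (simp add: mult_ac)
    also have "\<dots> = d"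
      using power_minus_mult[of m \<epsilon>] \<open>m \<ge> 1\<close> \<open>\<epsilon> ^ m = 1\<close> by simp
    finally have lead: "\<epsilon> ^ (m - 1) * (d * \<epsilon>) = d" .
    have "((\<lambda>t. \<epsilon> ^ (m - 1) * D (m - 1) (c + \<epsilon> * t)) has_real_derivative d) (at t within {lo..hi})"
      using DERIV_cmult[OF DERIV_compose_affine[OF d maps], of "\<epsilon> ^ (m - 1)"] unfolding lead .
    moreover have "(\<Sum>k<m. a k t * (\<epsilon> ^ k * D k (c + \<epsilon> * t))) = (\<Sum>k<m. b k (c + \<epsilon> * t) * D k (c + \<epsilon> * t))"
      using coeff elim by (intro sum.cong) auto
    ultimately show ?case
      using eq by auto
  qed
  then show ?thesis
    unfolding op_eq_def by (intro exI[of _ "\<lambda>k t. \<epsilon> ^ k * D k (c + \<epsilon> * t)"] conjI W_derivs_affine[OF D \<epsilon> maps])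
qed

section \<open>Sums over a family of reflections\<close>

text \<open>A pair \<open>(c, \<epsilon>)\<close> with \<open>\<epsilon> = \<plusminus>1\<close> encodes the isometry \<open>t \<mapsto> c + \<epsilon> t\<close>.\<close>
definition isometries_between :: "(real \<times> real) set \<Rightarrow> real \<Rightarrow> real \<Rightarrow> real \<Rightarrow> real \<Rightarrow> bool" where
  "isometries_between P lo hi lo' hi' \<longleftrightarrow> finite P \<and>
     (\<forall>(c, \<epsilon>)\<in>P. (\<epsilon> = 1 \<or> \<epsilon> = -1) \<and> (\<forall>t\<in>{lo..hi}. c + \<epsilon> * t \<in> {lo'..hi'}))"

definition reflected_sum :: "(real \<times> real) set \<Rightarrow> (real \<Rightarrow> real) \<Rightarrow> real \<Rightarrow> real" where
  "reflected_sum P w t = (\<Sum>(c, \<epsilon>)\<in>P. w (c + \<epsilon> * t))"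

lemma isometries_betweenD:
  assumes "isometries_between P lo hi lo' hi'"
  shows "finite P" and "(c, \<epsilon>) \<in> P \<Longrightarrow> \<epsilon> = 1 \<or> \<epsilon> = -1"
    and "(c, \<epsilon>) \<in> P \<Longrightarrow> \<forall>t\<in>{lo..hi}. c + \<epsilon> * t \<in> {lo'..hi'}"
  using assms unfolding isometries_between_def by auto

lemma W_derivs_reflected_sum:
  assumes P: "isometries_between P lo hi lo' hi'" and W: "W_derivs m lo' hi' w D"
  shows "W_derivs m lo hi (reflected_sum P w) (\<lambda>k t. \<Sum>(c, \<epsilon>)\<in>P. \<epsilon> ^ k * D k (c + \<epsilon> * t))"
proof -
  have "W_derivs m lo hi (\<lambda>t. \<Sum>(c, \<epsilon>)\<in>P. w (c + \<epsilon> * t))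
          (\<lambda>k t. \<Sum>(c, \<epsilon>)\<in>P. \<epsilon> ^ k * D k (c + \<epsilon> * t))"
  proof (rule W_derivs_sum[OF isometries_betweenD(1)[OF P]], clarify)
    fix c \<epsilon> assume "(c, \<epsilon>) \<in> P"
    from isometries_betweenD(2,3)[OF P this]
    show "W_derivs m lo hi (\<lambda>t. w (c + \<epsilon> * t)) (\<lambda>k t. \<epsilon> ^ k * D k (c + \<epsilon> * t))"
      by (rule W_derivs_affine[OF W])
  qed
  then show ?thesis
    unfolding reflected_sum_def .
qed

lemma op_eq_reflected_sum:
  assumes P: "isometries_between P lo hi lo' hi'" and op: "op_eq m b lo' hi' w \<sigma>"
    and "even m" "m \<ge> 1"
    and coeff: "\<forall>(c, \<epsilon>)\<in>P. \<forall>t\<in>{lo<..<hi}. \<forall>k<m. b k (c + \<epsilon> * t) = \<epsilon> ^ k * a k t"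
  shows "op_eq m a lo hi (reflected_sum P w) (reflected_sum P \<sigma>)"
proof -
  have "op_eq m a lo hi (\<lambda>t. \<Sum>(c, \<epsilon>)\<in>P. w (c + \<epsilon> * t)) (\<lambda>t. \<Sum>(c, \<epsilon>)\<in>P. \<sigma> (c + \<epsilon> * t))"
  proof (rule op_eq_sum[OF isometries_betweenD(1)[OF P]], clarify)
    fix c \<epsilon> assume "(c, \<epsilon>) \<in> P"
    with coeff isometries_betweenD(2,3)[OF P this]
    show "op_eq m a lo hi (\<lambda>t. w (c + \<epsilon> * t)) (\<lambda>t. \<sigma> (c + \<epsilon> * t))"
      by (intro op_eq_affine[OF op \<open>even m\<close> \<open>m \<ge> 1\<close>]) auto
  qed
  then show ?thesis
    unfolding reflected_sum_def .
qed

lemma reflected_sum_in_X_Neumann: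
  assumes P: "isometries_between P lo hi lo' hi'" and W: "W_derivs m lo' hi' w D"
    and odd_vanish: "\<And>k. odd k \<Longrightarrow> k < m \<Longrightarrow>
       (\<Sum>(c, \<epsilon>)\<in>P. \<epsilon> ^ k * D k (c + \<epsilon> * lo)) = 0 \<and> (\<Sum>(c, \<epsilon>)\<in>P. \<epsilon> ^ k * D k (c + \<epsilon> * hi)) = 0"
  shows "reflected_sum P w \<in> X_Neumann m lo hi"
  unfolding X_Neumann_def
proof (intro CollectI exI conjI allI impI)
  show "W_derivs m lo hi (reflected_sum P w) (\<lambda>k t. \<Sum>(c, \<epsilon>)\<in>P. \<epsilon> ^ k * D k (c + \<epsilon> * t))"
    by (rule W_derivs_reflected_sum[OF P W])
  fix k :: nat assume "2 * k + 1 < m"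
  moreover have "odd (2 * k + 1)" by simp
  ultimately have "(\<Sum>(c, \<epsilon>)\<in>P. \<epsilon> ^ (2 * k + 1) * D (2 * k + 1) (c + \<epsilon> * lo)) = 0 \<and>
                   (\<Sum>(c, \<epsilon>)\<in>P. \<epsilon> ^ (2 * k + 1) * D (2 * k + 1) (c + \<epsilon> * hi)) = 0"
    using odd_vanish by blast
  then show "(\<Sum>(c, \<epsilon>)\<in>P. \<epsilon> ^ (2 * k + 1) * D (2 * k + 1) (c + \<epsilon> * lo)) = 0"
    and "(\<Sum>(c, \<epsilon>)\<in>P. \<epsilon> ^ (2 * k + 1) * D (2 * k + 1) (c + \<epsilon> * hi)) = 0"
    by blast+
qed

section \<open>Green's functions\<close>

lemma integrable_lebesgue_on_indicator_mult:
  fixes \<sigma> :: "real \<Rightarrow> real"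
  assumes "integrable (lebesgue_on S) \<sigma>" "S \<subseteq> S'" "S \<in> sets lebesgue" "S' \<in> sets lebesgue"
  shows "integrable (lebesgue_on S') (\<lambda>s. indicator S s * \<sigma> s)"
proof -
  have "(\<lambda>s. indicator S' s * (indicator S s * \<sigma> s)) = (\<lambda>s. indicator S s * \<sigma> s)"
    using \<open>S \<subseteq> S'\<close> by (intro ext) (auto split: split_indicator)
  then show ?thesis
    using assms by (simp add: integrable_restrict_space)
qed

lemma integral_lebesgue_on_indicator_mult:
  fixes f \<sigma> :: "real \<Rightarrow> real"
  assumes "S \<subseteq> S'" "S \<in> sets lebesgue" "S' \<in> sets lebesgue"
  shows "(LINT s|lebesgue_on S'. f s * (indicator S s * \<sigma> s)) = (LINT s|lebesgue_on S. f s * \<sigma> s)"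
proof -
  have "(\<lambda>s. indicator S' s * (f s * (indicator S s * \<sigma> s))) = (\<lambda>s. indicator S s * (f s * \<sigma> s))"
    using \<open>S \<subseteq> S'\<close> by (intro ext) (auto split: split_indicator)
  then show ?thesis
    using assms by (simp add: integral_restrict_space)
qed

lemma continuous_on_integral_square_eq_0:
  fixes f :: "real \<Rightarrow> real"
  assumes f: "continuous_on {lo..hi} f" and "lo < hi"
    and zero: "(LINT s|lebesgue_on {lo..hi}. f s * f s) = 0" and "s \<in> {lo..hi}"
  shows "f s = 0"
proof -
  have sq: "continuous_on {lo..hi} (\<lambda>s. f s * f s)"
    using f by (intro continuous_intros)
  have "integral {lo..hi} (\<lambda>s. f s * f s) = 0"
    using zero lebesgue_integral_eq_integral[OF continuous_imp_integrable_real[OF sq]] by simp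
  then have "\<forall>x\<in>{lo..hi}. f x * f x = 0"
    using integral_cbox_eq_0_iff[of lo hi "\<lambda>s. f s * f s"] sq \<open>lo < hi\<close> by simp
  then show ?thesis
    using \<open>s \<in> {lo..hi}\<close> by simp
qed

lemma is_green_continuous_on_section:
  assumes "is_green m a lo hi X G" "t \<in> {lo..hi}"
  shows "continuous_on {lo..hi} (G t)"
proof -
  have "continuous_on ({lo..hi} \<times> {lo..hi}) (\<lambda>(t, s). G t s)"
    using assms(1) unfolding is_green_def by blast
  then have "continuous_on {lo..hi} (\<lambda>s. (\<lambda>(t, s). G t s) (t, s))"
    by (rule continuous_on_compose2) (use assms(2) in \<open>auto intro!: continuous_intros\<close>)
  then show ?thesis
    by simp
qed

lemma green_eqI:
  assumes G: "is_green m a lo hi X G" and "lo < hi"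
    and H_cont: "\<And>t. t \<in> {lo..hi} \<Longrightarrow> continuous_on {lo..hi} (H t)"
    and H_represents: "\<And>\<sigma>. continuous_on {lo..hi} \<sigma> \<Longrightarrow>
       \<exists>v. v \<in> X \<and> op_eq m a lo hi v \<sigma> \<and> (\<forall>t\<in>{lo..hi}. v t = (LINT s|lebesgue_on {lo..hi}. H t s * \<sigma> s))"
  shows "\<forall>t\<in>{lo..hi}. \<forall>s\<in>{lo..hi}. G t s = H t s"
proof (intro ballI)
  fix t s assume t: "t \<in> {lo..hi}" and s: "s \<in> {lo..hi}"
  have G_cont: "continuous_on {lo..hi} (G t)"
    using is_green_continuous_on_section[OF G t] .
  define \<sigma> where "\<sigma> s = G t s - H t s" for s
  have \<sigma>_cont: "continuous_on {lo..hi} \<sigma>"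
    unfolding \<sigma>_def using G_cont H_cont[OF t] by (intro continuous_intros)
  obtain v where v: "v \<in> X" "op_eq m a lo hi v \<sigma>"
    and v_H: "\<forall>t\<in>{lo..hi}. v t = (LINT s|lebesgue_on {lo..hi}. H t s * \<sigma> s)"
    using H_represents[OF \<sigma>_cont] by blast
  have "\<forall>t\<in>{lo..hi}. v t = (LINT s|lebesgue_on {lo..hi}. G t s * \<sigma> s)"
    using G v continuous_imp_integrable_real[OF \<sigma>_cont] unfolding is_green_def by blast
  with v_H t have "(LINT s|lebesgue_on {lo..hi}. G t s * \<sigma> s) = (LINT s|lebesgue_on {lo..hi}. H t s * \<sigma> s)"
    by simp
  moreover have "integrable (lebesgue_on {lo..hi}) (\<lambda>s. G t s * \<sigma> s)"
    and "integrable (lebesgue_on {lo..hi}) (\<lambda>s. H t s * \<sigma> s)"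
    using G_cont H_cont[OF t] \<sigma>_cont by (auto intro!: continuous_imp_integrable_real continuous_intros)
  ultimately have "(LINT s|lebesgue_on {lo..hi}. \<sigma> s * \<sigma> s) = 0"
    by (simp add: \<sigma>_def left_diff_distrib)
  then have "\<sigma> s = 0"
    using continuous_on_integral_square_eq_0[OF \<sigma>_cont \<open>lo < hi\<close> _ s] by simp
  then show "G t s = H t s"
    by (simp add: \<sigma>_def)
qed

lemma reflected_sum_indicator_mult:
  assumes "finite P" "(0, 1) \<in> P"
    and disjoint: "\<forall>(c, \<epsilon>)\<in>P - {(0, 1)}. \<forall>t\<in>{lo<..<hi}. c + \<epsilon> * t \<notin> {lo..hi}"
    and t: "t \<in> {lo<..<hi}"
  shows "reflected_sum P (\<lambda>s. indicator {lo..hi} s * \<sigma> s) t = \<sigma> t"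
proof -
  have vanish: "indicator {lo..hi} (c + \<epsilon> * t) * \<sigma> (c + \<epsilon> * t) = 0"
    if "(c, \<epsilon>) \<in> P - {(0, 1)}" for c \<epsilon>
  proof -
    have "c + \<epsilon> * t \<notin> {lo..hi}"
      using disjoint that t by blast
    then show ?thesis
      by simp
  qed
  have "(\<Sum>(c, \<epsilon>)\<in>P - {(0, 1)}. indicator {lo..hi} (c + \<epsilon> * t) * \<sigma> (c + \<epsilon> * t)) = 0"
  proof (rule sum.neutral, rule ballI)
    fix p assume p_mem: "p \<in> P - {(0, 1)}"
    obtain c \<epsilon> where p: "p = (c, \<epsilon>)"
      by fastforce
    show "(case p of (c, \<epsilon>) \<Rightarrow> indicator {lo..hi} (c + \<epsilon> * t) * \<sigma> (c + \<epsilon> * t)) = 0"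
      unfolding p case_prod_conv by (rule vanish) (use p_mem p in blast)
  qed
  then show ?thesis
    unfolding reflected_sum_def using assms(1,2) t by (simp add: sum.remove)
qed

lemma reflected_sum_integral:
  fixes G :: "real \<Rightarrow> real \<Rightarrow> real"
  assumes "finite P" "{lo..hi} \<subseteq> {lo'..hi'}"
    and G_cont: "\<And>c \<epsilon>. (c, \<epsilon>) \<in> P \<Longrightarrow> continuous_on {lo..hi} (G (c + \<epsilon> * t))"
    and \<sigma>_cont: "continuous_on {lo..hi} \<sigma>"
  shows "reflected_sum P (\<lambda>x. LINT s|lebesgue_on {lo'..hi'}. G x s * (indicator {lo..hi} s * \<sigma> s)) t
           = (LINT s|lebesgue_on {lo..hi}. reflected_sum P (\<lambda>x. G x s) t * \<sigma> s)"
proof -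
  have "integrable (lebesgue_on {lo..hi}) (\<lambda>s. G (fst p + snd p * t) s * \<sigma> s)" if "p \<in> P" for p
    using G_cont[of "fst p" "snd p"] that \<sigma>_cont
    by (intro continuous_imp_integrable_real continuous_intros) auto
  then have "(\<Sum>p\<in>P. LINT s|lebesgue_on {lo..hi}. G (fst p + snd p * t) s * \<sigma> s)
               = (LINT s|lebesgue_on {lo..hi}. (\<Sum>p\<in>P. G (fst p + snd p * t) s * \<sigma> s))"
    by (rule Bochner_Integration.integral_sum[symmetric])
  then show ?thesis
    unfolding reflected_sum_def case_prod_beta'
    by (simp add: integral_lebesgue_on_indicator_mult[OF \<open>{lo..hi} \<subseteq> {lo'..hi'}\<close>] sum_distrib_right)
qed

lemma green_Neumann_eq_reflected_sum:
  assumes "even m" "m \<ge> 1" "lo < hi"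
    and GN: "is_green m a lo hi (X_Neumann m lo hi) GN"
    and G: "is_green m b lo' hi' X G"
    and P: "isometries_between P lo hi lo' hi'" and "(0, 1) \<in> P"
    and coeff: "\<forall>(c, \<epsilon>)\<in>P. \<forall>t\<in>{lo<..<hi}. \<forall>k<m. b k (c + \<epsilon> * t) = \<epsilon> ^ k * a k t"
    and disjoint: "\<forall>(c, \<epsilon>)\<in>P - {(0, 1)}. \<forall>t\<in>{lo<..<hi}. c + \<epsilon> * t \<notin> {lo..hi}"
    and boundary: "\<And>w. w \<in> X \<Longrightarrow> reflected_sum P w \<in> X_Neumann m lo hi"
  shows "\<forall>t\<in>{lo..hi}. \<forall>s\<in>{lo..hi}. GN t s = reflected_sum P (\<lambda>x. G x s) t"
proof -
  have "finite P"
    using isometries_betweenD(1)[OF P] .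
  have "{lo..hi} \<subseteq> {lo'..hi'}"
    using isometries_betweenD(3)[OF P \<open>(0, 1) \<in> P\<close>] by auto
  have G_cont: "continuous_on {lo..hi} (G (c + \<epsilon> * t))" if "(c, \<epsilon>) \<in> P" "t \<in> {lo..hi}" for c \<epsilon> t
    using is_green_continuous_on_section[OF G] isometries_betweenD(3)[OF P that(1)] that(2)
      \<open>{lo..hi} \<subseteq> {lo'..hi'}\<close> by (blast intro: continuous_on_subset)
  show ?thesis
  proof (rule green_eqI[OF GN \<open>lo < hi\<close>])
    fix t assume "t \<in> {lo..hi}"
    then show "continuous_on {lo..hi} (\<lambda>s. reflected_sum P (\<lambda>x. G x s) t)"
      unfolding reflected_sum_def using G_cont by (intro continuous_on_sum) auto
  next
    fix \<sigma> :: "real \<Rightarrow> real" assume \<sigma>_cont: "continuous_on {lo..hi} \<sigma>"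
    define \<sigma>\<^sub>0 where "\<sigma>\<^sub>0 = (\<lambda>s. indicator {lo..hi} s * \<sigma> s)"
    define w where "w x = (LINT s|lebesgue_on {lo'..hi'}. G x s * \<sigma>\<^sub>0 s)" for x
    have "integrable (lebesgue_on {lo'..hi'}) \<sigma>\<^sub>0"
      unfolding \<sigma>\<^sub>0_def using \<open>{lo..hi} \<subseteq> {lo'..hi'}\<close>
      by (intro integrable_lebesgue_on_indicator_mult continuous_imp_integrable_real[OF \<sigma>_cont]) auto
    then have "w \<in> X" and w_eq: "op_eq m b lo' hi' w \<sigma>\<^sub>0"
      using G unfolding is_green_def w_def by blast+
    have "AE t in lebesgue_on {lo..hi}. reflected_sum P \<sigma>\<^sub>0 t = \<sigma> t"
      using AE_lebesgue_on_interior[of lo hi] unfolding \<sigma>\<^sub>0_def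
      by eventually_elim (auto intro: reflected_sum_indicator_mult[OF \<open>finite P\<close> \<open>(0, 1) \<in> P\<close> disjoint])
    with op_eq_reflected_sum[OF P w_eq \<open>even m\<close> \<open>m \<ge> 1\<close> coeff]
    have "op_eq m a lo hi (reflected_sum P w) \<sigma>"
      by (rule op_eq_AE_cong)
    moreover have "reflected_sum P w t = (LINT s|lebesgue_on {lo..hi}. reflected_sum P (\<lambda>x. G x s) t * \<sigma> s)"
      if "t \<in> {lo..hi}" for t
      unfolding w_def \<sigma>\<^sub>0_def
      by (rule reflected_sum_integral[OF \<open>finite P\<close> \<open>{lo..hi} \<subseteq> {lo'..hi'}\<close> _ \<sigma>_cont])
        (rule G_cont[OF _ that])
    ultimately show "\<exists>v. v \<in> X_Neumann m lo hi \<and> op_eq m a lo hi v \<sigma> \<and>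
        (\<forall>t\<in>{lo..hi}. v t = (LINT s|lebesgue_on {lo..hi}. reflected_sum P (\<lambda>x. G x s) t * \<sigma> s))"
      using boundary[OF \<open>w \<in> X\<close>] by blast
  qed
qed

section \<open>Doubling and quadrupling the interval\<close>

lemma refl_ext_at_reflections:
  assumes "t \<in> {0<..<T}"
  shows "refl_ext T a k t = a k t" and "refl_ext T a k (2 * T - t) = (-1) ^ k * a k t"
    and "refl_ext (2 * T) (refl_ext T a) k t = a k t"
    and "refl_ext (2 * T) (refl_ext T a) k (4 * T - t) = (-1) ^ k * a k t"
    and "refl_ext (2 * T) (refl_ext T a) k (2 * T - t) = (-1) ^ k * a k t"
    and "refl_ext (2 * T) (refl_ext T a) k (2 * T + t) = a k t"
  using assms by (auto simp: refl_ext_def minus_one_power_iff)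

lemma reflected_sum_doubling:
  "reflected_sum {(0, 1), (2 * T, -1)} w t = w t + w (2 * T - t)"
  by (simp add: reflected_sum_def)

lemma reflected_sum_quadrupling:
  assumes "T > 0"
  shows "reflected_sum {(0, 1), (4 * T, -1), (2 * T, -1), (2 * T, 1)} w t
           = w t + w (4 * T - t) + w (2 * T - t) + w (2 * T + t)"
  using assms by (simp add: reflected_sum_def)

lemma isometries_between_doubling:
  "T > 0 \<Longrightarrow> isometries_between {(0, 1), (2 * T, -1)} 0 T 0 (2 * T)"
  by (auto simp: isometries_between_def)

lemma isometries_between_quadrupling:
  "T > 0 \<Longrightarrow> isometries_between {(0, 1), (4 * T, -1), (2 * T, -1), (2 * T, 1)} 0 T 0 (4 * T)"
  by (auto simp: isometries_between_def)

lemma reflected_sum_doubling_in_X_Neumann: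
  assumes "T > 0" and w: "w \<in> X_Periodic m 0 (2 * T) \<or> w \<in> X_Neumann m 0 (2 * T)"
  shows "reflected_sum {(0, 1), (2 * T, -1)} w \<in> X_Neumann m 0 T"
proof -
  have "\<exists>D. W_derivs m 0 (2 * T) w D \<and> (\<forall>k. odd k \<and> k < m \<longrightarrow> D k 0 = D k (2 * T))"
    using w
  proof
    assume "w \<in> X_Periodic m 0 (2 * T)"
    then show ?thesis
      unfolding X_Periodic_def by blast
  next
    assume "w \<in> X_Neumann m 0 (2 * T)"
    then obtain D where D: "W_derivs m 0 (2 * T) w D"
      and ends: "\<forall>k. 2 * k + 1 < m \<longrightarrow> D (2 * k + 1) 0 = 0 \<and> D (2 * k + 1) (2 * T) = 0"
      unfolding X_Neumann_def by blast
    have "D k 0 = D k (2 * T)" if "odd k" "k < m" for k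
      using ends odd_two_times_div_two_succ[OF \<open>odd k\<close>] \<open>k < m\<close> by metis
    with D show ?thesis
      by blast
  qed
  then obtain D where D: "W_derivs m 0 (2 * T) w D"
    and D_ends: "\<And>k. odd k \<Longrightarrow> k < m \<Longrightarrow> D k 0 = D k (2 * T)"
    by blast
  show ?thesis
    using D_ends \<open>T > 0\<close>
    by (intro reflected_sum_in_X_Neumann[OF isometries_between_doubling[OF \<open>T > 0\<close>] D]) simp
qed

lemma reflected_sum_quadrupling_in_X_Neumann:
  assumes "T > 0" and w: "w \<in> X_Periodic m 0 (4 * T)"
  shows "reflected_sum {(0, 1), (4 * T, -1), (2 * T, -1), (2 * T, 1)} w \<in> X_Neumann m 0 T"
proof -
  obtain D where D: "W_derivs m 0 (4 * T) w D" and D_ends: "\<And>k. k < m \<Longrightarrow> D k 0 = D k (4 * T)"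
    using w unfolding X_Periodic_def by blast
  show ?thesis
    using D_ends \<open>T > 0\<close>
    by (intro reflected_sum_in_X_Neumann[OF isometries_between_quadrupling[OF \<open>T > 0\<close>] D]) simp
qed

lemma green_Neumann_eq_periodic_doubling:
  assumes "even m" "m \<ge> 1" "T > 0"
    and GN: "is_green m a 0 T (X_Neumann m 0 T) GN"
    and GP: "is_green m (refl_ext T a) 0 (2 * T) (X_Periodic m 0 (2 * T)) GP"
  shows "\<forall>t\<in>{0..T}. \<forall>s\<in>{0..T}. GN t s = GP t s + GP (2 * T - t) s"
proof -
  have "\<forall>t\<in>{0..T}. \<forall>s\<in>{0..T}. GN t s = reflected_sum {(0, 1), (2 * T, -1)} (\<lambda>x. GP x s) t"
  proof (rule green_Neumann_eq_reflected_sum[OF assms(1-3) GN GP isometries_between_doubling[OF \<open>T > 0\<close>]])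
    show "\<forall>(c, \<epsilon>)\<in>{(0, 1), (2 * T, -1)}. \<forall>t\<in>{0<..<T}. \<forall>k<m. refl_ext T a k (c + \<epsilon> * t) = \<epsilon> ^ k * a k t"
      using refl_ext_at_reflections(1,2) by auto
    show "\<forall>(c, \<epsilon>)\<in>{(0, 1), (2 * T, -1)} - {(0, 1)}. \<forall>t\<in>{0<..<T}. c + \<epsilon> * t \<notin> {0..T}"
      by auto
  qed (auto intro: reflected_sum_doubling_in_X_Neumann[OF \<open>T > 0\<close>])
  then show ?thesis
    by (simp add: reflected_sum_doubling)
qed

lemma green_Neumann_eq_Neumann_doubling:
  assumes "even m" "m \<ge> 1" "T > 0"
    and GN: "is_green m a 0 T (X_Neumann m 0 T) GN"
    and GN2: "is_green m (refl_ext T a) 0 (2 * T) (X_Neumann m 0 (2 * T)) GN2"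
  shows "\<forall>t\<in>{0..T}. \<forall>s\<in>{0..T}. GN t s = GN2 t s + GN2 (2 * T - t) s"
proof -
  have "\<forall>t\<in>{0..T}. \<forall>s\<in>{0..T}. GN t s = reflected_sum {(0, 1), (2 * T, -1)} (\<lambda>x. GN2 x s) t"
  proof (rule green_Neumann_eq_reflected_sum[OF assms(1-3) GN GN2 isometries_between_doubling[OF \<open>T > 0\<close>]])
    show "\<forall>(c, \<epsilon>)\<in>{(0, 1), (2 * T, -1)}. \<forall>t\<in>{0<..<T}. \<forall>k<m. refl_ext T a k (c + \<epsilon> * t) = \<epsilon> ^ k * a k t"
      using refl_ext_at_reflections(1,2) by auto
    show "\<forall>(c, \<epsilon>)\<in>{(0, 1), (2 * T, -1)} - {(0, 1)}. \<forall>t\<in>{0<..<T}. c + \<epsilon> * t \<notin> {0..T}"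
      by auto
  qed (auto intro: reflected_sum_doubling_in_X_Neumann[OF \<open>T > 0\<close>])
  then show ?thesis
    by (simp add: reflected_sum_doubling)
qed

lemma green_Neumann_eq_periodic_quadrupling:
  assumes "even m" "m \<ge> 1" "T > 0"
    and GN: "is_green m a 0 T (X_Neumann m 0 T) GN"
    and GP: "is_green m (refl_ext (2 * T) (refl_ext T a)) 0 (4 * T) (X_Periodic m 0 (4 * T)) GP"
  shows "\<forall>t\<in>{0..T}. \<forall>s\<in>{0..T}.
           GN t s = GP t s + GP (4 * T - t) s + GP (2 * T - t) s + GP (2 * T + t) s"
proof -
  let ?P = "{(0, 1), (4 * T, -1), (2 * T, -1), (2 * T, 1)}"
  have "\<forall>t\<in>{0..T}. \<forall>s\<in>{0..T}. GN t s = reflected_sum ?P (\<lambda>x. GP x s) t"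
  proof (rule green_Neumann_eq_reflected_sum[OF assms(1-3) GN GP isometries_between_quadrupling[OF \<open>T > 0\<close>]])
    show "\<forall>(c, \<epsilon>)\<in>?P. \<forall>t\<in>{0<..<T}. \<forall>k<m.
            refl_ext (2 * T) (refl_ext T a) k (c + \<epsilon> * t) = \<epsilon> ^ k * a k t"
      using refl_ext_at_reflections(3-6) by auto
    show "\<forall>(c, \<epsilon>)\<in>?P - {(0, 1)}. \<forall>t\<in>{0<..<T}. c + \<epsilon> * t \<notin> {0..T}"
      by auto
  qed (auto intro: reflected_sum_quadrupling_in_X_Neumann[OF \<open>T > 0\<close>])
  then show ?thesis
    using \<open>T > 0\<close> by (simp add: reflected_sum_quadrupling)
qed

theorem mainTheorem2:
  fixes n :: nat and T \<alpha> :: real and a :: "nat \<Rightarrow> real \<Rightarrow> real"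
    and GN GP2 GN2 GP4 :: "real \<Rightarrow> real \<Rightarrow> real"
  assumes "n \<ge> 1" and "T > 0" and "\<alpha> \<ge> 1"
    and "\<forall>k<2*n. Lp_on \<alpha> {0..T} (a k)"
  shows
    "(is_green (2*n) a 0 T (X_Neumann (2*n) 0 T) GN \<and>
      is_green (2*n) (refl_ext T a) 0 (2*T) (X_Periodic (2*n) 0 (2*T)) GP2
      \<longrightarrow> (\<forall>t\<in>{0..T}. \<forall>s\<in>{0..T}. GN t s = GP2 t s + GP2 (2*T - t) s))
   \<and> (is_green (2*n) a 0 T (X_Neumann (2*n) 0 T) GN \<and>
      is_green (2*n) (refl_ext T a) 0 (2*T) (X_Neumann (2*n) 0 (2*T)) GN2
      \<longrightarrow> (\<forall>t\<in>{0..T}. \<forall>s\<in>{0..T}. GN t s = GN2 t s + GN2 (2*T - t) s))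
   \<and> (is_green (2*n) a 0 T (X_Neumann (2*n) 0 T) GN \<and>
      is_green (2*n) (refl_ext (2*T) (refl_ext T a)) 0 (4*T) (X_Periodic (2*n) 0 (4*T)) GP4
      \<longrightarrow> (\<forall>t\<in>{0..T}. \<forall>s\<in>{0..T}.
             GN t s = GP4 t s + GP4 (4*T - t) s + GP4 (2*T - t) s + GP4 (2*T + t) s))"
proof -
  have m: "even (2 * n)" "2 * n \<ge> 1"
    using \<open>n \<ge> 1\<close> by auto
  show ?thesis
    using green_Neumann_eq_periodic_doubling[OF m \<open>T > 0\<close>, of a GN GP2]
      green_Neumann_eq_Neumann_doubling[OF m \<open>T > 0\<close>, of a GN GN2]
      green_Neumann_eq_periodic_quadrupling[OF m \<open>T > 0\<close>, of a GN GP4]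
    by blast
qed

end
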